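(* Let $k\ge0$, $m\ge1$, and let $\varepsilon,\varepsilon'\in\{0,1\}^k$ be binary sequences differing only at position $r$ ($1\le r\le k$). Then $P(\varepsilon;b)-P(\varepsilon';b)$ can be written as a quotient $f(a,x)/g(a,x)$ of polynomials with $g$ not divisible by the linear form $M(\varepsilon;b;r)$ $(=M(\varepsilon';b;r))$.
   Context: Let $a=(a_1,\dots,a_k)$ and $x=(x_1,\dots,x_m)$ be indeterminates and $b=(b_1,\dots,b_{k+m}):=(a_1,\dots,a_k,x_1,\dots,x_m)$. For a binary sequence $\varepsilon=(\varepsilon_1,\dots,\varepsilon_k)$ put $\delta^\varepsilon=(\delta^\varepsilon_1,\dots,\delta^\varepsilon_{k+m}):=(1,\varepsilon_1,\dots,\varepsilon_k,0,\dots,0)$ (length $k+m$: a $1$ prepended and $m-1$ zeros appended). Let $L(\delta^\varepsilon,j):=\max\{i\le j:\delta^\varepsilon_i=1\}$, $M(\varepsilon;b;j):=\sum_{\ell=L(\delta^\varepsilon,j)}^{j}b_\ell$, and $P(\varepsilon;b):=\prod_{j=1}^{k+m}\frac1{M(\varepsilon;b;j)}$. *)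

theory Defs
  imports Complex_Main "HOL-Library.Poly_Mapping"
begin

text \<open>Variable number i stands for b_i, i.e. b_i = a_i for 1 <= i <= k and
  b_(k+j) = x_j for 1 <= j <= m.\<close>

type_synonym mpoly = "(nat \<Rightarrow>\<^sub>0 nat) \<Rightarrow>\<^sub>0 real"

definition pvar :: "nat \<Rightarrow> mpoly" where
  "pvar i = Poly_Mapping.single (Poly_Mapping.single i 1) 1"

definition pvars :: "mpoly \<Rightarrow> nat set" where
  "pvars p = \<Union> ((\<lambda>mon :: nat \<Rightarrow>\<^sub>0 nat. Poly_Mapping.keys mon) ` Poly_Mapping.keys p)"

definition peval :: "mpoly \<Rightarrow> (nat \<Rightarrow> real) \<Rightarrow> real" where
  "peval p v = (\<Sum>mon \<in> Poly_Mapping.keys p. Poly_Mapping.lookup p mon * (\<Prod>i \<in> Poly_Mapping.keys mon. v i ^ Poly_Mapping.lookup mon i))"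

text \<open>delta^eps = (1, eps_1, ..., eps_k, 0, ..., 0), indexed 1..k+m (true = 1).\<close>
definition delta :: "(nat \<Rightarrow> bool) \<Rightarrow> nat \<Rightarrow> nat \<Rightarrow> bool" where
  "delta eps k j = (if j = 1 then True else if 2 \<le> j \<and> j \<le> k + 1 then eps (j - 1) else False)"

definition Lidx :: "(nat \<Rightarrow> bool) \<Rightarrow> nat \<Rightarrow> nat \<Rightarrow> nat" where
  "Lidx eps k j = (GREATEST i. 1 \<le> i \<and> i \<le> j \<and> delta eps k i)"

definition Mval :: "(nat \<Rightarrow> bool) \<Rightarrow> nat \<Rightarrow> (nat \<Rightarrow> real) \<Rightarrow> nat \<Rightarrow> real" where
  "Mval eps k b j = (\<Sum>l = Lidx eps k j..j. b l)"

definition Mpoly :: "(nat \<Rightarrow> bool) \<Rightarrow> nat \<Rightarrow> nat \<Rightarrow> mpoly" where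
  "Mpoly eps k j = (\<Sum>l = Lidx eps k j..j. pvar l)"

definition Pval :: "(nat \<Rightarrow> bool) \<Rightarrow> nat \<Rightarrow> nat \<Rightarrow> (nat \<Rightarrow> real) \<Rightarrow> real" where
  "Pval eps k m b = (\<Prod>j = 1..k + m. 1 / Mval eps k b j)"

end

theory Submission imports Defs begin

text \<open>Put \<open>X = M(\<epsilon>;b;r)\<close>. Since \<open>L(\<delta>,j)\<close> for \<open>j \<le> r\<close> only depends on
  \<open>\<delta>\<^sub>1, \<dots>, \<delta>\<^sub>r\<close>, while \<open>\<delta>\<^sup>\<epsilon>\<close> and \<open>\<delta>\<^sup>\<epsilon>\<^sup>'\<close> differ only at \<open>r + 1\<close>, also
  \<open>X = M(\<epsilon>';b;r)\<close>. For \<open>j > r\<close> the two indices \<open>L(\<cdot>,j)\<close> agree unless one of them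
  is \<open>r + 1\<close>, and then the other one is \<open>L(\<delta>\<^sup>\<epsilon>,r)\<close>; hence
  \<open>M(\<epsilon>';b;j) - M(\<epsilon>;b;j) \<in> {0, X, -X}\<close> for every \<open>j\<close>. Consequently the products
  \<open>\<Pi>, \<Pi>'\<close> of the remaining factors \<open>M(\<cdot>;b;j)\<close>, \<open>j \<noteq> r\<close>, satisfy \<open>\<Pi>' - \<Pi> = X h\<close>,
  so that \<open>P(\<epsilon>;b) - P(\<epsilon>';b) = (\<Pi>' - \<Pi>) / (X \<Pi> \<Pi>') = h / (\<Pi> \<Pi>')\<close>. Finally
  \<open>X\<close> does not divide \<open>\<Pi> \<Pi>'\<close>: at the point with \<open>b\<^sub>r = L(\<delta>\<^sup>\<epsilon>,r) - r\<close> and all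
  other \<open>b\<^sub>l = 1\<close>, \<open>X\<close> vanishes while every \<open>M(\<cdot>;b;j)\<close> with \<open>j \<noteq> r\<close> equals
  \<open>j - r\<close> or a positive interval length.\<close>

definition eval_monom :: "(nat \<Rightarrow>\<^sub>0 nat) \<Rightarrow> (nat \<Rightarrow> real) \<Rightarrow> real" where
  "eval_monom mon v = (\<Prod>i \<in> Poly_Mapping.keys mon. v i ^ Poly_Mapping.lookup mon i)"

lemma eval_monom_superset:
  "finite S \<Longrightarrow> Poly_Mapping.keys mon \<subseteq> S \<Longrightarrow>
    eval_monom mon v = (\<Prod>i \<in> S. v i ^ Poly_Mapping.lookup mon i)"
  unfolding eval_monom_def by (rule prod.mono_neutral_left) (auto simp: in_keys_iff)

lemma eval_monom_add: "eval_monom (mon + mon') v = eval_monom mon v * eval_monom mon' v"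
proof -
  let ?S = "Poly_Mapping.keys mon \<union> Poly_Mapping.keys mon'"
  have "eval_monom (mon + mon') v = (\<Prod>i \<in> ?S. v i ^ Poly_Mapping.lookup (mon + mon') i)"
    using keys_add[of mon mon'] by (intro eval_monom_superset) auto
  also have "\<dots> = eval_monom mon v * eval_monom mon' v"
    by (subst (1 2) eval_monom_superset[of ?S]) (auto simp: lookup_add power_add prod.distrib)
  finally show ?thesis .
qed

lemma peval_eq_sum: "peval p v = (\<Sum>mon \<in> Poly_Mapping.keys p. Poly_Mapping.lookup p mon * eval_monom mon v)"
  by (simp add: peval_def eval_monom_def)

lemma peval_superset:
  "finite S \<Longrightarrow> Poly_Mapping.keys p \<subseteq> S \<Longrightarrow>
    peval p v = (\<Sum>mon \<in> S. Poly_Mapping.lookup p mon * eval_monom mon v)"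
  unfolding peval_eq_sum by (rule sum.mono_neutral_left) (auto simp: in_keys_iff)

lemma peval_zero [simp]: "peval 0 v = 0"
  by (simp add: peval_def)

lemma peval_one [simp]: "peval 1 v = 1"
  by (simp add: peval_def)

lemma peval_single: "peval (Poly_Mapping.single mon c) v = c * eval_monom mon v"
  by (subst peval_superset[of "{mon}"]) auto

lemma peval_pvar [simp]: "peval (pvar i) v = v i"
  by (simp add: pvar_def peval_single eval_monom_def)

lemma peval_add: "peval (p + q) v = peval p v + peval q v"
proof -
  let ?S = "Poly_Mapping.keys p \<union> Poly_Mapping.keys q"
  have "peval (p + q) v = (\<Sum>mon \<in> ?S. Poly_Mapping.lookup (p + q) mon * eval_monom mon v)"
    using keys_add[of p q] by (intro peval_superset) auto
  also have "\<dots> = peval p v + peval q v"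
    by (subst (1 2) peval_superset[of ?S]) (auto simp: lookup_add algebra_simps sum.distrib)
  finally show ?thesis .
qed

lemma peval_diff: "peval (p - q) v = peval p v - peval q v"
  using peval_add[of "p - q" q v] by simp

lemma peval_sum: "peval (sum f A) v = (\<Sum>a\<in>A. peval (f a) v)"
  by (induction A rule: infinite_finite_induct) (auto simp: peval_add)

lemma mpoly_eq_sum_single:
  "p = (\<Sum>mon \<in> Poly_Mapping.keys p. Poly_Mapping.single mon (Poly_Mapping.lookup p mon))"
  by (rule poly_mapping_eqI) (auto simp: lookup_sum lookup_single when_def in_keys_iff)

lemma peval_mult: "peval (p * q) v = peval p v * peval q v"
proof -
  have "p * q = (\<Sum>mon \<in> Poly_Mapping.keys p. \<Sum>mon' \<in> Poly_Mapping.keys q.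
      Poly_Mapping.single (mon + mon') (Poly_Mapping.lookup p mon * Poly_Mapping.lookup q mon'))"
    by (subst (1) mpoly_eq_sum_single[of p], subst (1) mpoly_eq_sum_single[of q])
       (simp add: sum_product mult_single)
  then have "peval (p * q) v = (\<Sum>mon \<in> Poly_Mapping.keys p. \<Sum>mon' \<in> Poly_Mapping.keys q.
      Poly_Mapping.lookup p mon * Poly_Mapping.lookup q mon' * (eval_monom mon v * eval_monom mon' v))"
    by (simp only: peval_sum peval_single eval_monom_add)
  also have "\<dots> = peval p v * peval q v"
    by (simp add: peval_eq_sum sum_product algebra_simps)
  finally show ?thesis .
qed

lemma peval_prod: "peval (prod f A) v = (\<Prod>a\<in>A. peval (f a) v)"
  by (induction A rule: infinite_finite_induct) (auto simp: peval_mult)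

lemma not_dvd_if_peval_root:
  assumes "peval p v = 0" and "peval q v \<noteq> 0"
  shows "\<not> p dvd q"
  using assms by (auto elim!: dvdE simp: peval_mult)

lemma pvars_zero [simp]: "pvars 0 = {}"
  by (simp add: pvars_def)

lemma pvars_one [simp]: "pvars 1 = {}"
  by (simp add: pvars_def)

lemma pvars_uminus [simp]: "pvars (- p) = pvars p"
  by (simp add: pvars_def)

lemma pvars_pvar [simp]: "pvars (pvar i) = {i}"
  by (simp add: pvars_def pvar_def)

lemma pvars_add: "pvars (p + q) \<subseteq> pvars p \<union> pvars q"
  using keys_add[of p q] by (auto simp: pvars_def)

lemma pvars_mult: "pvars (p * q) \<subseteq> pvars p \<union> pvars q"
proof
  fix i assume "i \<in> pvars (p * q)"
  then obtain mon where mon: "mon \<in> Poly_Mapping.keys (p * q)" "i \<in> Poly_Mapping.keys mon"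
    unfolding pvars_def by auto
  then obtain mp mq where "mon = mp + mq" "mp \<in> Poly_Mapping.keys p" "mq \<in> Poly_Mapping.keys q"
    using keys_mult[of p q] by auto
  then show "i \<in> pvars p \<union> pvars q"
    using keys_add[of mp mq] mon(2) by (auto simp: pvars_def)
qed

lemma pvars_sum: "(\<And>a. a \<in> A \<Longrightarrow> pvars (f a) \<subseteq> V) \<Longrightarrow> pvars (sum f A) \<subseteq> V"
  by (induction A rule: infinite_finite_induct) (use pvars_add in fastforce)+

lemma pvars_prod: "(\<And>a. a \<in> A \<Longrightarrow> pvars (f a) \<subseteq> V) \<Longrightarrow> pvars (prod f A) \<subseteq> V"
  by (induction A rule: infinite_finite_induct) (use pvars_mult in fastforce)+

lemma prod_diff_factor:
  fixes u w :: "'a \<Rightarrow> mpoly"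
  assumes "finite A"
    and "\<And>j. j \<in> A \<Longrightarrow> pvars (u j) \<subseteq> V \<and> pvars (w j) \<subseteq> V"
    and "\<And>j. j \<in> A \<Longrightarrow> \<exists>c. pvars c \<subseteq> V \<and> u j - w j = x * c"
  shows "\<exists>h. pvars h \<subseteq> V \<and> prod u A - prod w A = x * h"
  using assms
proof (induction A rule: finite_induct)
  case empty
  show ?case by (intro exI[of _ 0]) simp
next
  case (insert a A)
  then obtain h where h: "pvars h \<subseteq> V" "prod u A - prod w A = x * h"
    by auto
  obtain c where c: "pvars c \<subseteq> V" "u a - w a = x * c"
    using insert.prems(2) by blast
  have "prod u (insert a A) - prod w (insert a A)
      = u a * (prod u A - prod w A) + (u a - w a) * prod w A"
    using insert.hyps by (simp add: algebra_simps)
  also have "\<dots> = x * (u a * h + c * prod w A)"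
    by (simp add: h c algebra_simps)
  finally have "prod u (insert a A) - prod w (insert a A) = x * (u a * h + c * prod w A)" .
  moreover have "pvars (u a * h + c * prod w A) \<subseteq> V"
    using pvars_add[of "u a * h"] pvars_mult[of "u a" h] pvars_mult[of c "prod w A"]
      pvars_prod[of A w V] insert.prems(1) h(1) c(1) by blast
  ultimately show ?case by blast
qed

lemma Lidx_bounds: "1 \<le> j \<Longrightarrow> Lidx e k j \<in> {1..j}"
  and delta_Lidx: "1 \<le> j \<Longrightarrow> delta e k (Lidx e k j)"
proof -
  assume j: "1 \<le> j"
  have "1 \<le> Lidx e k j \<and> Lidx e k j \<le> j \<and> delta e k (Lidx e k j)"
    unfolding Lidx_def by (rule GreatestI_nat[where k = 1 and b = j]) (use j in \<open>auto simp: delta_def\<close>)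
  then show "Lidx e k j \<in> {1..j}" and "delta e k (Lidx e k j)"
    by auto
qed

lemma Lidx_greatest: "1 \<le> i \<Longrightarrow> i \<le> j \<Longrightarrow> delta e k i \<Longrightarrow> i \<le> Lidx e k j"
  unfolding Lidx_def by (rule Greatest_le_nat[where b = j]) auto

lemma Lidx_eq_if_le:
  assumes "1 \<le> r" and "r \<le> j" and "Lidx e k j \<le> r"
  shows "Lidx e k j = Lidx e k r"
  using Lidx_greatest[of "Lidx e k r" j e k] Lidx_greatest[of "Lidx e k j" r e k]
    Lidx_bounds[of r e k] Lidx_bounds[of j e k] delta_Lidx[of r e k] delta_Lidx[of j e k] assms
  by fastforce

lemma Lidx_cong:
  "(\<And>i. 1 \<le> i \<Longrightarrow> i \<le> j \<Longrightarrow> delta e k i = delta e' k i) \<Longrightarrow> Lidx e k j = Lidx e' k j"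
  unfolding Lidx_def by (metis (no_types, lifting))

lemma pvars_Mpoly: "j \<in> {1..n} \<Longrightarrow> pvars (Mpoly e k j) \<subseteq> {1..n}"
  unfolding Mpoly_def by (rule pvars_sum) (use Lidx_bounds[of j e k] in auto)

lemma pvars_prod_Mpoly: "J \<subseteq> {1..n} \<Longrightarrow> pvars (\<Prod>j\<in>J. Mpoly e k j) \<subseteq> {1..n}"
  using pvars_Mpoly by (intro pvars_prod) blast

lemma peval_Mpoly: "peval (Mpoly e k j) b = Mval e k b j"
  by (simp add: Mpoly_def Mval_def peval_sum)

lemma Pval_eq_remove:
  assumes "r \<in> {1..k + m}"
  shows "Pval e k m b = 1 / (Mval e k b r * (\<Prod>j \<in> {1..k + m} - {r}. Mval e k b j))"
  using prod.remove[OF _ assms, of "Mval e k b"] by (simp add: Pval_def prod_dividef)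

lemma Pval_diff_eq:
  assumes r: "r \<in> {1..k + m}"
    and nonzero: "\<forall>j \<in> {1..k + m}. Mval e k b j \<noteq> 0 \<and> Mval e' k b j \<noteq> 0"
    and same_at_r: "Mval e' k b r = Mval e k b r"
    and diff: "(\<Prod>j \<in> {1..k + m} - {r}. Mval e' k b j) - (\<Prod>j \<in> {1..k + m} - {r}. Mval e k b j)
      = Mval e k b r * y"
  shows "(\<Prod>j \<in> {1..k + m} - {r}. Mval e k b j) * (\<Prod>j \<in> {1..k + m} - {r}. Mval e' k b j)
      * (Pval e k m b - Pval e' k m b) = y"
proof -
  define x where "x = Mval e k b r"
  define p where "p = (\<Prod>j \<in> {1..k + m} - {r}. Mval e k b j)"
  define p' where "p' = (\<Prod>j \<in> {1..k + m} - {r}. Mval e' k b j)"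
  have "x \<noteq> 0" "p \<noteq> 0" "p' \<noteq> 0"
    using nonzero r by (auto simp: x_def p_def p'_def)
  moreover have "Pval e k m b = 1 / (x * p)" and "Pval e' k m b = 1 / (x * p')"
    using Pval_eq_remove[OF r] same_at_r by (simp_all add: x_def p_def p'_def)
  ultimately have "p * p' * (Pval e k m b - Pval e' k m b) = (p' - p) / x"
    by (simp add: field_simps)
  with diff \<open>x \<noteq> 0\<close> show ?thesis
    by (simp add: x_def p_def p'_def)
qed

definition root_point :: "nat \<Rightarrow> nat \<Rightarrow> nat \<Rightarrow> real" where
  "root_point a r l = (if l = r then - real (r - a) else 1)"

lemma sum_root_point_in:
  assumes "a \<le> r" and "r \<le> j"
  shows "(\<Sum>l = a..j. root_point a r l) = real j - real r"
proof -
  have r: "r \<in> {a..j}" using assms by simp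
  have "(\<Sum>l = a..j. root_point a r l) = root_point a r r + (\<Sum>l \<in> {a..j} - {r}. 1)"
    using r by (simp add: sum.remove root_point_def)
  also have "\<dots> = - real (r - a) + real (j - a)"
    using r by (simp add: root_point_def card_Diff_singleton)
  finally show ?thesis using assms by simp
qed

lemma sum_root_point_out:
  assumes "r \<notin> {a..j}"
  shows "(\<Sum>l = a..j. root_point c r l) = real (j + 1 - a)"
proof -
  have "(\<Sum>l = a..j. root_point c r l) = (\<Sum>l = a..j. 1)"
    using assms by (intro sum.cong) (auto simp: root_point_def)
  then show ?thesis
    by simp
qed

lemma Mval_root_point_eq_0_iff:
  assumes "1 \<le> r" and "1 \<le> j"
  shows "Mval e k (root_point (Lidx e k r) r) j = 0 \<longleftrightarrow> j = r"
proof (cases "r \<in> {Lidx e k j..j}")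
  case True
  then have "Lidx e k j = Lidx e k r"
    using Lidx_eq_if_le[OF assms(1)] by auto
  then show ?thesis
    using True sum_root_point_in by (simp add: Mval_def)
next
  case False
  then have "Mval e k (root_point (Lidx e k r) r) j = real (j + 1 - Lidx e k j)"
    unfolding Mval_def by (rule sum_root_point_out)
  moreover have "j \<noteq> r" and "Lidx e k j \<le> j"
    using False Lidx_bounds[OF assms(2)] by auto
  ultimately show ?thesis
    by simp
qed

locale flip_at =
  fixes k r :: nat and eps eps' :: "nat \<Rightarrow> bool"
  assumes r_pos: "1 \<le> r" and r_le: "r \<le> k"
    and agree: "\<forall>i \<in> {1..k}. i \<noteq> r \<longrightarrow> eps i = eps' i"
    and differ: "eps r \<noteq> eps' r"

context flip_at
begin

lemma flip_at_swap: "flip_at k r eps' eps"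
  using r_pos r_le agree differ by unfold_locales auto

lemma delta_eq:
  assumes "i \<noteq> r + 1"
  shows "delta eps' k i = delta eps k i"
proof -
  have "eps' (i - 1) = eps (i - 1)" if "2 \<le> i" and "i \<le> k + 1"
  proof -
    have "i - 1 \<in> {1..k}" and "i - 1 \<noteq> r"
      using that assms by auto
    then show ?thesis
      using agree by auto
  qed
  then show ?thesis
    by (simp add: delta_def)
qed

lemma delta_Suc_r: "delta e k (r + 1) = e r"
  using r_pos r_le by (simp add: delta_def)

lemma Lidx_eq_below: "j \<le> r \<Longrightarrow> Lidx eps' k j = Lidx eps k j"
  by (rule Lidx_cong) (use delta_eq in auto)

lemma Mpoly_eq_at: "Mpoly eps' k r = Mpoly eps k r"
  by (simp add: Mpoly_def Lidx_eq_below)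

lemma Lidx_eq_unless_Suc_r:
  assumes "1 \<le> j" and "Lidx eps k j \<noteq> r + 1" and "Lidx eps' k j \<noteq> r + 1"
  shows "Lidx eps' k j = Lidx eps k j"
  using Lidx_greatest[of "Lidx eps k j" j eps' k] Lidx_greatest[of "Lidx eps' k j" j eps k]
    Lidx_bounds[of j] delta_Lidx[of j] delta_eq assms
  by (metis atLeastAtMost_iff le_antisym)

lemma Lidx_flip_at_Suc_r:
  assumes j: "1 \<le> j" and L: "Lidx eps k j = r + 1"
  shows "Lidx eps' k j = Lidx eps k r"
proof -
  have "\<not> delta eps' k (r + 1)"
    using delta_Lidx[OF j, of eps k] L differ delta_Suc_r by simp
  then have "Lidx eps' k j \<noteq> r + 1"
    using delta_Lidx[OF j, of eps' k] by auto
  moreover have "Lidx eps' k j \<le> Lidx eps k j"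
    using Lidx_greatest[of "Lidx eps' k j" j eps k] Lidx_bounds[OF j] delta_Lidx[OF j, of eps' k]
      delta_eq calculation by auto
  ultimately have "Lidx eps' k j \<le> r"
    using L by simp
  moreover have "r \<le> j"
    using Lidx_bounds[OF j, of eps k] L by simp
  ultimately show ?thesis
    using Lidx_eq_if_le[OF r_pos, of j eps' k] Lidx_eq_below[of r] by simp
qed

lemma Mpoly_flip_at_Suc_r:
  assumes "1 \<le> j" and L: "Lidx eps k j = r + 1"
  shows "Mpoly eps' k j = Mpoly eps k r + Mpoly eps k j"
proof -
  have "Lidx eps k r \<le> r + 1" and "r \<le> j"
    using Lidx_bounds[OF r_pos, of eps k] Lidx_bounds[OF \<open>1 \<le> j\<close>, of eps k] L by auto
  then have "{Lidx eps k r..j} = {Lidx eps k r..r} \<union> {r + 1..j}"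
    by auto
  then show ?thesis
    by (simp add: Mpoly_def Lidx_flip_at_Suc_r[OF assms] L sum.union_disjoint)
qed

lemma Mpoly_diff:
  assumes "1 \<le> j"
  shows "Mpoly eps' k j - Mpoly eps k j \<in> {0, Mpoly eps k r, - Mpoly eps k r}"
proof -
  consider "Lidx eps k j = r + 1" | "Lidx eps' k j = r + 1"
    | "Lidx eps' k j = Lidx eps k j"
    using Lidx_eq_unless_Suc_r[OF assms] by blast
  then show ?thesis
  proof cases
    case 1
    then show ?thesis using Mpoly_flip_at_Suc_r[OF assms] by simp
  next
    case 2
    interpret swapped: flip_at k r eps' eps
      by (rule flip_at_swap)
    from 2 show ?thesis
      using swapped.Mpoly_flip_at_Suc_r[OF assms] Mpoly_eq_at by simp
  next
    case 3
    then show ?thesis by (simp add: Mpoly_def)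
  qed
qed


lemma Mval_eq_at: "Mval eps' k b r = Mval eps k b r"
  by (simp add: Mval_def Lidx_eq_below)

lemma Mpoly_prod_diff:
  assumes "finite J" and "J \<subseteq> {1..n}"
  shows "\<exists>h. pvars h \<subseteq> {1..n} \<and>
    (\<Prod>j\<in>J. Mpoly eps' k j) - (\<Prod>j\<in>J. Mpoly eps k j) = Mpoly eps k r * h"
proof (rule prod_diff_factor[OF assms(1)])
  fix j assume "j \<in> J"
  then have j: "j \<in> {1..n}"
    using assms(2) by auto
  then show "pvars (Mpoly eps' k j) \<subseteq> {1..n} \<and> pvars (Mpoly eps k j) \<subseteq> {1..n}"
    using pvars_Mpoly by blast
  show "\<exists>c. pvars c \<subseteq> {1..n} \<and> Mpoly eps' k j - Mpoly eps k j = Mpoly eps k r * c"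
    using Mpoly_diff[of j] j by (auto intro: exI[of _ 0] exI[of _ 1] exI[of _ "-1"])
qed

lemma Mpoly_not_dvd_prod:
  assumes "finite J" and "\<forall>j \<in> J. 1 \<le> j \<and> j \<noteq> r"
  shows "\<not> Mpoly eps k r dvd (\<Prod>j\<in>J. Mpoly eps k j) * (\<Prod>j\<in>J. Mpoly eps' k j)"
proof (rule not_dvd_if_peval_root)
  let ?b = "root_point (Lidx eps k r) r"
  show "peval (Mpoly eps k r) ?b = 0"
    using Mval_root_point_eq_0_iff[OF r_pos r_pos] by (simp add: peval_Mpoly)
  show "peval ((\<Prod>j\<in>J. Mpoly eps k j) * (\<Prod>j\<in>J. Mpoly eps' k j)) ?b \<noteq> 0"
    using Mval_root_point_eq_0_iff[OF r_pos, of _ eps k]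
      Mval_root_point_eq_0_iff[OF r_pos, of _ eps' k] Lidx_eq_below[of r] assms
    by (simp add: peval_mult peval_prod peval_Mpoly)
qed

end

theorem mainTheorem7:
  fixes k m r :: nat and eps eps' :: "nat \<Rightarrow> bool"
  assumes "1 \<le> m" and "1 \<le> r" and "r \<le> k"
    and "\<forall>i \<in> {1..k}. i \<noteq> r \<longrightarrow> eps i = eps' i"
    and "eps r \<noteq> eps' r"
  shows "\<exists>f g :: mpoly. pvars f \<subseteq> {1..k + m} \<and> pvars g \<subseteq> {1..k + m} \<and>
           \<not> (Mpoly eps k r dvd g) \<and>
           (\<forall>b :: nat \<Rightarrow> real.
              (\<forall>j \<in> {1..k + m}. Mval eps k b j \<noteq> 0 \<and> Mval eps' k b j \<noteq> 0) \<longrightarrow>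
              peval g b * (Pval eps k m b - Pval eps' k m b) = peval f b)"
proof -
  interpret flip_at k r eps eps'
    using assms(2-5) by unfold_locales
  define J where "J = {1..k + m} - {r}"
  define g where "g = (\<Prod>j\<in>J. Mpoly eps k j) * (\<Prod>j\<in>J. Mpoly eps' k j)"
  have r: "r \<in> {1..k + m}"
    using assms(2,3) by simp
  have J: "finite J" "J \<subseteq> {1..k + m}"
    by (auto simp: J_def)
  obtain h where "pvars h \<subseteq> {1..k + m}"
    and h: "(\<Prod>j\<in>J. Mpoly eps' k j) - (\<Prod>j\<in>J. Mpoly eps k j) = Mpoly eps k r * h"
    using Mpoly_prod_diff[OF J] by blast
  moreover have "pvars g \<subseteq> {1..k + m}"
    unfolding g_def using pvars_mult pvars_prod_Mpoly[OF J(2)] by blast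
  moreover have "\<not> Mpoly eps k r dvd g"
    unfolding g_def by (rule Mpoly_not_dvd_prod) (use J in \<open>auto simp: J_def\<close>)
  moreover have "peval g b * (Pval eps k m b - Pval eps' k m b) = peval h b"
    if nonzero: "\<forall>j \<in> {1..k + m}. Mval eps k b j \<noteq> 0 \<and> Mval eps' k b j \<noteq> 0" for b
  proof -
    have "peval g b = (\<Prod>j\<in>J. Mval eps k b j) * (\<Prod>j\<in>J. Mval eps' k b j)"
      by (simp add: g_def peval_mult peval_prod peval_Mpoly)
    moreover have "(\<Prod>j\<in>J. Mval eps' k b j) - (\<Prod>j\<in>J. Mval eps k b j) = Mval eps k b r * peval h b"
      using arg_cong[OF h, of "\<lambda>q. peval q b"]
      by (simp add: peval_diff peval_mult peval_prod peval_Mpoly)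
    ultimately show ?thesis
      using Pval_diff_eq[OF r nonzero Mval_eq_at] by (simp add: J_def)
  qed
  ultimately show ?thesis
    by blast
qed

end
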